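(* Let $U$ be a VLA-J-SS. Let $U_1$ be the subspace spanned by all vectors $u_m(v_nw)-\varepsilon_{u,v}v_n(u_mw)-\sum_{i\ge0}\binom{m}{i}(u_iv)_{n+m-i}w$ with $u,v,w\in U$ homogeneous and $m,n\in\mathbb{N}$, and let $U_2$ be the subspace spanned by all vectors $$\sum_{i\ge0}(-1)^i\binom{k}{i}\big(u_{m+k-i}(v_{n+i}w)-\varepsilon_{u,v}(-1)^kv_{n+k-i}(u_{m+i}w)\big)-\sum_{i\ge0}\binom{m}{i}(u_{k+i}v)_{m+n-i}w$$ with $u,v,w\in U$ homogeneous and $k,m,n\in\mathbb{N}$. Then $U_1=U_2$.
   Context: All spaces over $\mathbb{C}$; $\mathbb{N}=\{0,1,2,\dots\}$; $\varepsilon_{u,v}=(-1)^{|u||v|}$. A VLA-J-SS is a $\mathbb{Z}_2$-graded space $U$ with an even linear operator $D$ and bilinear products $u_nv$ ($n\in\mathbb{N}$) such that for homogeneous $u,v$: $u_nv=0$ for $n$ large; $(Du)_nv=-nu_{n-1}v$ (read as $0$ for $n=0$); $D(u_nv)=(Du)_nv+u_n(Dv)$; $|u_nv|=|u|+|v|$. *)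

theory Defs
  imports Complex_Main
begin

text \<open>The underlying space is a type 'a with an
abstract complex scalar multiplication sc (a complex vector space via the HOL locale
vector_space). The Z2-grading is given by two subspaces Ev (even part) and Od (odd part)
with Ev \<inter> Od = {0} and Ev + Od = whole space. The products u_n v are pr n u v.\<close>

definition homog :: "'a set \<Rightarrow> 'a set \<Rightarrow> 'a \<Rightarrow> bool" where
  "homog Ev Od u \<longleftrightarrow> u \<in> Ev \<or> u \<in> Od"

text \<open>Sign epsilon_{u,v} = (-1)^{|u||v|}; it is -1 exactly when both are odd.\<close>
definition eps :: "'a set \<Rightarrow> 'a \<Rightarrow> 'a \<Rightarrow> complex" where
  "eps Od u v = (if u \<in> Od \<and> v \<in> Od then -1 else 1)"

locale VLA_J_SS = vector_space sc
  for sc :: "complex \<Rightarrow> 'a::ab_group_add \<Rightarrow> 'a"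
  + fixes Ev Od :: "'a set"
    and D :: "'a \<Rightarrow> 'a"
    and pr :: "nat \<Rightarrow> 'a \<Rightarrow> 'a \<Rightarrow> 'a"
  assumes sub_Ev: "subspace Ev"
    and sub_Od: "subspace Od"
    and Ev_Od_inter: "Ev \<inter> Od = {0}"
    and Ev_Od_sum: "\<forall>x. \<exists>a\<in>Ev. \<exists>b\<in>Od. x = a + b"
    and D_linear: "Vector_Spaces.linear sc sc D"
    and D_even: "\<forall>u\<in>Ev. D u \<in> Ev" "\<forall>u\<in>Od. D u \<in> Od"
    and pr_linear_left: "\<forall>n v. Vector_Spaces.linear sc sc (\<lambda>u. pr n u v)"
    and pr_linear_right: "\<forall>n u. Vector_Spaces.linear sc sc (pr n u)"
    and pr_locality: "\<forall>u v. homog Ev Od u \<longrightarrow> homog Ev Od v \<longrightarrow>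
                         (\<exists>N. \<forall>n\<ge>N. pr n u v = 0)"
    and pr_D_left: "\<forall>u v n. homog Ev Od u \<longrightarrow> homog Ev Od v \<longrightarrow>
           pr n (D u) v = (if n = 0 then 0 else - sc (of_nat n) (pr (n - 1) u v))"
    and pr_D_deriv: "\<forall>u v n. homog Ev Od u \<longrightarrow> homog Ev Od v \<longrightarrow>
           D (pr n u v) = pr n (D u) v + pr n u (D v)"
    and pr_parity: "\<forall>u v n.
           (u \<in> Ev \<longrightarrow> v \<in> Ev \<longrightarrow> pr n u v \<in> Ev) \<and>
           (u \<in> Ev \<longrightarrow> v \<in> Od \<longrightarrow> pr n u v \<in> Od) \<and>
           (u \<in> Od \<longrightarrow> v \<in> Ev \<longrightarrow> pr n u v \<in> Od) \<and>
           (u \<in> Od \<longrightarrow> v \<in> Od \<longrightarrow> pr n u v \<in> Ev)"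

definition gens1 :: "(complex \<Rightarrow> 'a \<Rightarrow> 'a) \<Rightarrow> 'a set \<Rightarrow> 'a set
    \<Rightarrow> (nat \<Rightarrow> 'a \<Rightarrow> 'a \<Rightarrow> 'a) \<Rightarrow> ('a::ab_group_add) set" where
  "gens1 sc Ev Od pr =
    {pr m u (pr n v w) - sc (eps Od u v) (pr n v (pr m u w))
       - (\<Sum>i = 0..m. sc (of_nat (m choose i)) (pr (n + m - i) (pr i u v) w))
     | u v w m n. homog Ev Od u \<and> homog Ev Od v \<and> homog Ev Od w}"

definition gens2 :: "(complex \<Rightarrow> 'a \<Rightarrow> 'a) \<Rightarrow> 'a set \<Rightarrow> 'a set
    \<Rightarrow> (nat \<Rightarrow> 'a \<Rightarrow> 'a \<Rightarrow> 'a) \<Rightarrow> ('a::ab_group_add) set" where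
  "gens2 sc Ev Od pr =
    {(\<Sum>i = 0..k. sc ((-1) ^ i * of_nat (k choose i))
         (pr (m + k - i) u (pr (n + i) v w)
          - sc (eps Od u v * (-1) ^ k) (pr (n + k - i) v (pr (m + i) u w))))
       - (\<Sum>i = 0..m. sc (of_nat (m choose i)) (pr (m + n - i) (pr (k + i) u v) w))
     | u v w k m n. homog Ev Od u \<and> homog Ev Od v \<and> homog Ev Od w}"

end

theory Submission imports Defs begin

text \<open>Write \<open>J(k,m,n)\<close> for the generator of \<open>U\<^sub>2\<close> with parameters \<open>k, m, n\<close>. By Pascal's rule
  \<open>J(k+1,m,n) = J(k,m+1,n) - J(k,m,n+1)\<close>; the factor \<open>(-1)\<^sup>k\<close> in front of the \<open>v\<^sub>\<bullet>(u\<^sub>\<bullet>w)\<close> terms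
  compensates for the opposite sign of their own Pascal recursion. Moreover \<open>J(0,m,n)\<close> is the
  generator of \<open>U\<^sub>1\<close> with parameters \<open>m, n\<close>. Induction on \<open>k\<close> gives \<open>U\<^sub>2 \<subseteq> U\<^sub>1\<close>, and the case \<open>k = 0\<close>
  gives \<open>U\<^sub>1 \<subseteq> U\<^sub>2\<close>.\<close>

definition jacobi_element ::
    "('r::comm_ring_1 \<Rightarrow> 'a \<Rightarrow> 'a) \<Rightarrow> 'r \<Rightarrow> (nat \<Rightarrow> 'a \<Rightarrow> 'a \<Rightarrow> 'a)
      \<Rightarrow> 'a \<Rightarrow> 'a \<Rightarrow> 'a \<Rightarrow> nat \<Rightarrow> nat \<Rightarrow> nat \<Rightarrow> 'a::ab_group_add" where
  "jacobi_element sc e pr u v w k m n =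
    (\<Sum>i = 0..k. sc ((-1) ^ i * of_nat (k choose i))
         (pr (m + k - i) u (pr (n + i) v w)
          - sc (e * (-1) ^ k) (pr (n + k - i) v (pr (m + i) u w))))
    - (\<Sum>i = 0..m. sc (of_nat (m choose i)) (pr (m + n - i) (pr (k + i) u v) w))"

lemma gens2_eq_jacobi_elements:
  "gens2 sc Ev Od pr =
    {jacobi_element sc (eps Od u v) pr u v w k m n
     | u v w k m n. homog Ev Od u \<and> homog Ev Od v \<and> homog Ev Od w}"
  unfolding gens2_def jacobi_element_def ..

context module
begin

lemma alternating_binomial_sum_Suc:
  fixes f :: "nat \<Rightarrow> nat \<Rightarrow> 'b"
  shows "(\<Sum>i\<le>Suc k. ((-1)^i * of_nat (Suc k choose i)) *s f (m + Suc k - i) (n + i))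
       = (\<Sum>i\<le>k. ((-1)^i * of_nat (k choose i)) *s f (Suc m + k - i) (n + i))
       - (\<Sum>i\<le>k. ((-1)^i * of_nat (k choose i)) *s f (m + k - i) (Suc n + i))"
proof -
  have shifted: "(\<Sum>i\<le>k. ((-1)^i * of_nat (k choose i)) *s f (Suc m + k - i) (n + i))
     = f (m + Suc k) n
       + (\<Sum>i\<le>k. ((-1)^Suc i * of_nat (k choose Suc i)) *s f (m + k - i) (n + Suc i))"
  proof -
    have "(\<Sum>i\<le>k. ((-1)^i * of_nat (k choose i)) *s f (Suc m + k - i) (n + i))
       = (\<Sum>i\<le>Suc k. ((-1)^i * of_nat (k choose i)) *s f (Suc m + k - i) (n + i))"
      by (simp add: binomial_eq_0)
    also have "\<dots> = f (m + Suc k) n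
       + (\<Sum>i\<le>k. ((-1)^Suc i * of_nat (k choose Suc i)) *s f (m + k - i) (n + Suc i))"
      by (subst sum.atMost_Suc_shift) simp
    finally show ?thesis .
  qed
  have "(\<Sum>i\<le>Suc k. ((-1)^i * of_nat (Suc k choose i)) *s f (m + Suc k - i) (n + i))
      = f (m + Suc k) n
        + (\<Sum>i\<le>k. ((-1)^Suc i * of_nat (Suc k choose Suc i)) *s f (m + k - i) (n + Suc i))"
    by (subst sum.atMost_Suc_shift) simp
  also have "(\<Sum>i\<le>k. ((-1)^Suc i * of_nat (Suc k choose Suc i)) *s f (m + k - i) (n + Suc i))
      = (\<Sum>i\<le>k. ((-1)^Suc i * of_nat (k choose Suc i)) *s f (m + k - i) (n + Suc i))
       - (\<Sum>i\<le>k. ((-1)^i * of_nat (k choose i)) *s f (m + k - i) (Suc n + i))"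
    unfolding sum_subtractf[symmetric]
    by (rule sum.cong) (simp_all add: algebra_simps scale_left_diff_distrib)
  finally show ?thesis
    using shifted by (simp add: algebra_simps)
qed

lemma binomial_sum_Suc:
  fixes h :: "nat \<Rightarrow> nat \<Rightarrow> 'b"
  shows "(\<Sum>i\<le>Suc m. of_nat (Suc m choose i) *s h (k + i) (Suc m + n - i))
     = (\<Sum>i\<le>m. of_nat (m choose i) *s h (k + i) (m + Suc n - i))
     + (\<Sum>i\<le>m. of_nat (m choose i) *s h (Suc k + i) (m + n - i))"
proof -
  have shifted: "(\<Sum>i\<le>m. of_nat (m choose i) *s h (k + i) (m + Suc n - i))
     = h k (Suc m + n) + (\<Sum>i\<le>m. of_nat (m choose Suc i) *s h (k + Suc i) (m + n - i))"
  proof -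
    have "(\<Sum>i\<le>m. of_nat (m choose i) *s h (k + i) (m + Suc n - i))
       = (\<Sum>i\<le>Suc m. of_nat (m choose i) *s h (k + i) (m + Suc n - i))"
      by (simp add: binomial_eq_0)
    also have "\<dots> = h k (Suc m + n)
       + (\<Sum>i\<le>m. of_nat (m choose Suc i) *s h (k + Suc i) (m + n - i))"
      by (subst sum.atMost_Suc_shift) simp
    finally show ?thesis .
  qed
  have "(\<Sum>i\<le>Suc m. of_nat (Suc m choose i) *s h (k + i) (Suc m + n - i))
      = h k (Suc m + n) + (\<Sum>i\<le>m. of_nat (Suc m choose Suc i) *s h (k + Suc i) (m + n - i))"
    by (subst sum.atMost_Suc_shift) simp
  also have "(\<Sum>i\<le>m. of_nat (Suc m choose Suc i) *s h (k + Suc i) (m + n - i))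
      = (\<Sum>i\<le>m. of_nat (m choose Suc i) *s h (k + Suc i) (m + n - i))
      + (\<Sum>i\<le>m. of_nat (m choose i) *s h (Suc k + i) (m + n - i))"
    by (simp add: sum.distrib[symmetric] algebra_simps)
  finally show ?thesis
    using shifted by (simp add: algebra_simps)
qed

lemma jacobi_element_Suc:
  "jacobi_element scale e pr u v w (Suc k) m n
     = jacobi_element scale e pr u v w k (Suc m) n - jacobi_element scale e pr u v w k m (Suc n)"
proof -
  define A where "A k m n = (\<Sum>i\<le>k. ((-1)^i * of_nat (k choose i)) *s pr (m+k-i) u (pr (n+i) v w))"
    for k m n
  define B where "B k m n = (\<Sum>i\<le>k. ((-1)^i * of_nat (k choose i)) *s pr (n+k-i) v (pr (m+i) u w))"
    for k m n
  define C where "C k m n = (\<Sum>i\<le>m. of_nat (m choose i) *s pr (m+n-i) (pr (k+i) u v) w)"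
    for k m n
  have jacobi_element_split:
    "jacobi_element scale e pr u v w k m n = A k m n - (e * (-1)^k) *s B k m n - C k m n" for k m n
    unfolding jacobi_element_def A_def B_def C_def atLeast0AtMost
    by (simp add: scale_right_diff_distrib sum_subtractf scale_sum_right
        mult.commute mult.left_commute)
  have A_Suc: "A (Suc k) m n = A k (Suc m) n - A k m (Suc n)"
    unfolding A_def
    using alternating_binomial_sum_Suc[where f = "\<lambda>a b. pr a u (pr b v w)"] by simp
  have B_Suc: "B (Suc k) m n = B k m (Suc n) - B k (Suc m) n"
    unfolding B_def
    using alternating_binomial_sum_Suc[where f = "\<lambda>a b. pr a v (pr b u w)" and m = n and n = m]
    by simp
  have C_Suc: "C (Suc k) m n = C k (Suc m) n - C k m (Suc n)"
    unfolding C_def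
    using binomial_sum_Suc[where h = "\<lambda>a b. pr b (pr a u v) w" and k = k and m = m and n = n]
    by (simp add: algebra_simps)
  show ?thesis
    unfolding jacobi_element_split A_Suc B_Suc C_Suc by (simp add: algebra_simps)
qed

lemma jacobi_element_0:
  "jacobi_element scale e pr u v w 0 m n
     = pr m u (pr n v w) - e *s pr n v (pr m u w)
       - (\<Sum>i = 0..m. of_nat (m choose i) *s pr (n + m - i) (pr i u v) w)"
  unfolding jacobi_element_def by (simp add: add.commute)

lemma jacobi_element_in_span:
  assumes "\<And>m n. jacobi_element scale e pr u v w 0 m n \<in> span S"
  shows "jacobi_element scale e pr u v w k m n \<in> span S"
proof (induction k arbitrary: m n)
  case 0
  show ?case by (rule assms)
next
  case (Suc k)
  then show ?case
    unfolding jacobi_element_Suc by (intro span_diff)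
qed

end

lemma span_gens1_eq_span_gens2:
  fixes sc :: "complex \<Rightarrow> 'a::ab_group_add \<Rightarrow> 'a"
  assumes "module sc"
  shows "module.span sc (gens1 sc Ev Od pr) = module.span sc (gens2 sc Ev Od pr)"
proof -
  interpret module sc by (rule assms)
  have gens1_eq: "gens1 sc Ev Od pr =
    {jacobi_element sc (eps Od u v) pr u v w 0 m n
     | u v w m n. homog Ev Od u \<and> homog Ev Od v \<and> homog Ev Od w}"
    unfolding gens1_def jacobi_element_0 ..
  have "gens1 sc Ev Od pr \<subseteq> gens2 sc Ev Od pr"
    unfolding gens1_eq gens2_eq_jacobi_elements by blast
  moreover have "gens2 sc Ev Od pr \<subseteq> span (gens1 sc Ev Od pr)"
  proof
    fix x
    assume "x \<in> gens2 sc Ev Od pr"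
    then obtain u v w k m n where homog: "homog Ev Od u" "homog Ev Od v" "homog Ev Od w"
      and x: "x = jacobi_element sc (eps Od u v) pr u v w k m n"
      unfolding gens2_eq_jacobi_elements by blast
    have "jacobi_element sc (eps Od u v) pr u v w 0 m' n' \<in> span (gens1 sc Ev Od pr)" for m' n'
      using homog unfolding gens1_eq by (intro span_base) blast
    then show "x \<in> span (gens1 sc Ev Od pr)"
      unfolding x by (rule jacobi_element_in_span)
  qed
  ultimately show ?thesis
    unfolding span_eq using span_superset by blast
qed

theorem lemma6p4:
  fixes sc :: "complex \<Rightarrow> 'a::ab_group_add \<Rightarrow> 'a"
  assumes "VLA_J_SS sc Ev Od D pr"
  shows "module.span sc (gens1 sc Ev Od pr) = module.span sc (gens2 sc Ev Od pr)"
proof -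
  have "module sc"
    using assms unfolding VLA_J_SS_def vector_space_def module_def by blast
  then show ?thesis
    by (rule span_gens1_eq_span_gens2)
qed

end
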